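(* For $|q|<1$, $$1+\sum_{n=1}^\infty\frac{q^{(2n-1)^2}(-q;q^2)_{2n-1}\left(-1+q^{4n-1}+q^{8n}+q^{8n-2}\right)}{(q^4;q^4)_{2n}}=\frac{(q;q)_\infty}{(q^4;q^4)_\infty}.$$
   Context: $(a;q)_n=\prod_{k=0}^{n-1}(1-aq^k)$, $(a;q)_\infty=\prod_{k\ge0}(1-aq^k)$. *)

theory Defs
  imports "HOL-Analysis.Analysis"
begin

definition qpoch :: "complex \<Rightarrow> complex \<Rightarrow> nat \<Rightarrow> complex" where
  "qpoch a q n = (\<Prod>k<n. 1 - a * q ^ k)"

definition qpochinf :: "complex \<Rightarrow> complex \<Rightarrow> complex" where
  "qpochinf a q = (\<Prod>k. 1 - a * q ^ k)"

end

theory Submission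
  imports Defs
begin

(*
  Put F(a) = sum_{n>=0} (-1)^n q^(n^2) a^n (-q;q^2)_n / ((q^2;q^2)_n (-a q^2;q^2)_n) for |a| <= 1.
  Since (q^2;q^2)_n (-q^2;q^2)_n = (q^4;q^4)_n, F(1) is the series of the theorem with the terms
  of indices 2n-1 and 2n combined.  Telescoping the difference of the series for a and for q^2 a gives
  the q-difference equation (1 + a q^2) F(a) = (1 - q a) F(q^2 a), and F(a) -> 1 as a -> 0.
  Iterating along a = q^(2M) yields F(1) = (q;q^2)_oo / (-q^2;q^2)_oo = (q;q)_oo / (q^4;q^4)_oo.
*)

lemma one_pm_mult_power_nonzero:
  fixes q a :: "'a::real_normed_div_algebra"
  assumes "norm a \<le> 1" "norm q < 1" "0 < k"
  shows "1 + a * q ^ k \<noteq> 0" "1 - a * q ^ k \<noteq> 0"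
proof -
  have "norm (q ^ k) < 1"
    using assms by (simp add: norm_power power_less_one_iff)
  moreover have "norm a * norm (q ^ k) \<le> norm (q ^ k)"
    using assms(1) by (simp add: mult_left_le_one_le)
  ultimately have "norm (a * q ^ k) < 1"
    by (simp add: norm_mult)
  then show "1 + a * q ^ k \<noteq> 0" "1 - a * q ^ k \<noteq> 0"
    by (auto simp: add_eq_0_iff2 simp flip: eq_iff_diff_eq_0)
      (metis norm_minus_cancel norm_one less_irrefl)
qed

lemmas one_minus_power_nonzero =
  one_pm_mult_power_nonzero(2)[of 1, unfolded norm_one mult_1, OF order_refl]

lemma summable_prod_geometric_factors:
  fixes c r :: real
  assumes "0 \<le> c" "0 \<le> r" "r < 1"
  shows "summable (\<lambda>n. \<Prod>j<n. c * r ^ j)"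
proof -
  have "(\<lambda>n. c * r ^ n) \<longlonglongrightarrow> c * 0"
    using assms by (intro tendsto_mult tendsto_const LIMSEQ_power_zero) auto
  then have "eventually (\<lambda>n. c * r ^ n < 1/2) sequentially"
    by (intro order_tendstoD(2)) auto
  then obtain N where N: "\<And>n. n \<ge> N \<Longrightarrow> c * r ^ n < 1/2"
    by (auto simp: eventually_sequentially)
  show ?thesis
  proof (rule summable_ratio_test[of "1/2" N])
    fix n assume "n \<ge> N"
    have "0 \<le> (\<Prod>j<n. c * r ^ j)"
      using assms by (simp add: prod_nonneg)
    then have "(\<Prod>j<n. c * r ^ j) * (c * r ^ n) \<le> (\<Prod>j<n. c * r ^ j) * (1/2)"
      using N[OF \<open>n \<ge> N\<close>] by (intro mult_left_mono) auto
    then show "norm (\<Prod>j<Suc n. c * r ^ j) \<le> 1/2 * norm (\<Prod>j<n. c * r ^ j)"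
      using assms by (simp add: abs_prod prod_nonneg)
  qed simp
qed

lemma qpoch_Suc: "qpoch a p (Suc n) = qpoch a p n * (1 - a * p ^ n)"
  by (simp add: qpoch_def)

lemma qpoch_even_length:
  "qpoch q q (2*M) = (\<Prod>m<M. (1 - q ^ (2*m+1)) * (1 - q ^ (2*m+2)))"
  by (induction M) (simp_all add: qpoch_def)

lemma qpoch_fourth_power:
  "qpoch (q ^ 4) (q ^ 4) M = (\<Prod>m<M. (1 + q ^ (2*m+2)) * (1 - q ^ (2*m+2)))"
proof -
  have square: "(q ^ (2*m+2))\<^sup>2 = q ^ 4 * (q ^ 4) ^ m" for m
  proof -
    have "(q ^ (2*m+2))\<^sup>2 = q ^ ((2*m+2) * 2)"
      by (rule power_mult[symmetric])
    also have "\<dots> = q ^ (4 + 4*m)"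
      by (rule arg_cong[where f = "power q"]) simp
    finally show ?thesis
      by (simp only: power_add power_mult)
  qed
  show ?thesis
    unfolding qpoch_def square[symmetric] by (simp add: power2_eq_square algebra_simps)
qed

lemma qpoch_fourth_power_nonzero:
  assumes "norm q < 1"
  shows "qpoch (q ^ 4) (q ^ 4) k \<noteq> 0"
  using one_minus_power_nonzero[OF assms, of "Suc j" for j]
    one_pm_mult_power_nonzero(1)[of 1, OF _ assms]
  unfolding qpoch_fourth_power by (simp add: prod_zero_iff del: power_Suc)

lemma qpoch_tendsto_qpochinf:
  assumes "norm p < 1"
  shows "convergent_prod (\<lambda>k. 1 - a * p ^ k)" "qpoch a p \<longlonglongrightarrow> qpochinf a p"
proof -
  have "summable (\<lambda>k. norm ((1 - a * p ^ k) - 1))"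
    using assms by (simp add: norm_mult norm_power summable_mult summable_geometric)
  then show cp: "convergent_prod (\<lambda>k. 1 - a * p ^ k)"
    by (intro abs_convergent_prod_imp_convergent_prod) (simp add: abs_convergent_prod_conv_summable)
  have "(\<lambda>n. qpoch a p (Suc n)) \<longlonglongrightarrow> qpochinf a p"
    using convergent_prod_LIMSEQ[OF cp] by (simp add: qpoch_def qpochinf_def lessThan_Suc_atMost)
  then show "qpoch a p \<longlonglongrightarrow> qpochinf a p"
    by (rule LIMSEQ_imp_Suc)
qed

lemma qpochinf_nonzero:
  assumes "norm p < 1" "\<And>k. a * p ^ k \<noteq> 1"
  shows "qpochinf a p \<noteq> 0"
  unfolding qpochinf_def using assms by (intro prodinf_nonzero qpoch_tendsto_qpochinf) auto

text \<open>\<open>F_term q a n\<close> is the \<open>n\<close>-th term of \<open>F(a)\<close>, written as the product of the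
  ratios of consecutive terms.\<close>

definition F_factor :: "complex \<Rightarrow> complex \<Rightarrow> nat \<Rightarrow> complex" where
  "F_factor q a j = - (q * a * q ^ (2*j) * (1 + q ^ (2*j+1)))
                      / ((1 - q ^ (2*j+2)) * (1 + a * q ^ (2*j+2)))"

definition F_term :: "complex \<Rightarrow> complex \<Rightarrow> nat \<Rightarrow> complex" where
  "F_term q a n = (\<Prod>j<n. F_factor q a j)"

definition F :: "complex \<Rightarrow> complex \<Rightarrow> complex" where
  "F q a = (\<Sum>n. F_term q a n)"

lemma F_term_0 [simp]: "F_term q a 0 = 1"
  and F_term_Suc [simp]: "F_term q a (Suc n) = F_term q a n * F_factor q a n"
  by (simp_all add: F_term_def)

definition F_factor_bound :: "complex \<Rightarrow> real" where
  "F_factor_bound q = 2 * norm q / (1 - norm q ^ 2) ^ 2"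

lemma norm_F_factor_le:
  assumes q: "norm q < 1" and a: "norm a \<le> 1"
  shows "norm (F_factor q a j) \<le> norm a * (F_factor_bound q * (norm q ^ 2) ^ j)"
proof -
  define r where "r = norm q"
  have r: "0 \<le> r" "r < 1" "r ^ 2 < 1"
    using q by (auto simp: r_def power_less_one_iff)
  have small: "r ^ (2*j+2) \<le> r ^ 2"
    using r by (intro power_decreasing) auto
  have num: "norm (q * a * q ^ (2*j) * (1 + q ^ (2*j+1))) \<le> r * norm a * r ^ (2*j) * 2"
  proof -
    have "norm (1 + q ^ (2*j+1)) \<le> 1 + r ^ (2*j+1)"
      using norm_triangle_ineq[of 1 "q ^ (2*j+1)"] by (simp add: r_def norm_power norm_mult)
    also have "\<dots> \<le> 2"
      using power_le_one[of r "2*j+1"] r by simp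
    finally show ?thesis
      using r by (simp add: norm_mult norm_power r_def mult_left_mono)
  qed
  have den1: "1 - r ^ 2 \<le> norm (1 - q ^ (2*j+2))"
    using norm_triangle_ineq2[of 1 "q ^ (2*j+2)"] small by (simp add: r_def norm_power norm_mult)
  have den2: "1 - r ^ 2 \<le> norm (1 + a * q ^ (2*j+2))"
  proof -
    have "norm (a * q ^ (2*j+2)) \<le> r ^ (2*j+2)"
      using a by (simp add: norm_mult norm_power r_def mult_left_le_one_le)
    then show ?thesis
      using norm_triangle_ineq2[of 1 "- (a * q ^ (2*j+2))"] small by simp
  qed
  have "(1 - r ^ 2) ^ 2 \<le> norm ((1 - q ^ (2*j+2)) * (1 + a * q ^ (2*j+2)))"
    using mult_mono[OF den1 den2] r by (simp add: norm_mult power2_eq_square)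
  then have "norm (F_factor q a j) \<le> r * norm a * r ^ (2*j) * 2 / (1 - r ^ 2) ^ 2"
    unfolding F_factor_def norm_divide norm_minus_cancel
    using num r by (intro frac_le) auto
  moreover have "r ^ (2*j) = (r\<^sup>2) ^ j"
    by (simp add: power_mult)
  ultimately show ?thesis
    by (simp add: F_factor_bound_def r_def field_simps)
qed

lemma F_term_shift:
  assumes q: "norm q < 1" and a: "norm a \<le> 1"
  shows "F_term q (q\<^sup>2 * a) n * (1 + a * q ^ (2*n+2)) = q ^ (2*n) * (1 + a * q\<^sup>2) * F_term q a n"
proof (induction n)
  case (Suc n)
  define x where "x = q ^ (2*n)"
  define N where "N = - (q * a * x * (1 + q * x))"
  define d where "d = 1 - q\<^sup>2 * x"
  define D where "D = 1 + a * (q\<^sup>2 * x)"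
  define D' where "D' = 1 + a * (q\<^sup>2 * (q\<^sup>2 * x))"
  have pow: "q ^ (2*n+1) = q * x" "q ^ (2*n+2) = q\<^sup>2 * x"
    "q ^ (2 * Suc n) = q\<^sup>2 * x" "q ^ (2 * Suc n + 2) = q\<^sup>2 * (q\<^sup>2 * x)"
    by (simp_all add: x_def power_add power2_eq_square)
  have nz: "d \<noteq> 0" "D \<noteq> 0" "D' \<noteq> 0"
    using one_minus_power_nonzero[OF q, of "2*n+2"]
      one_pm_mult_power_nonzero(1)[OF a q, of "2*n+2"]
      one_pm_mult_power_nonzero(1)[OF a q, of "2*Suc n+2"]
    unfolding d_def D_def D'_def pow by auto
  have factor: "F_factor q a n = N / (d * D)"
    by (simp add: F_factor_def pow N_def d_def D_def power2_eq_square mult.assoc flip: x_def)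
  have factor': "F_factor q (q\<^sup>2 * a) n = q\<^sup>2 * N / (d * D')"
    by (simp add: F_factor_def pow N_def d_def D'_def x_def power2_eq_square ac_simps)
  have IH: "F_term q (q\<^sup>2 * a) n * D = x * (1 + a * q\<^sup>2) * F_term q a n"
    using Suc.IH unfolding pow(2) x_def[symmetric] D_def .
  have "F_term q (q\<^sup>2 * a) (Suc n) * D' = F_term q (q\<^sup>2 * a) n * D * q\<^sup>2 * N / (d * D)"
    using nz by (simp add: factor')
  also have "\<dots> = q\<^sup>2 * x * (1 + a * q\<^sup>2) * F_term q a (Suc n)"
    unfolding IH F_term_Suc factor by (simp add: field_simps)
  finally show ?case
    unfolding pow D'_def .
qed (simp add: power2_eq_square)

lemma F_term_telescoping:
  assumes q: "norm q < 1" and a: "norm a \<le> 1"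
  shows "(1 + a * q\<^sup>2) * F_term q a n - (1 - q * a) * F_term q (q\<^sup>2 * a) n
       = (1 + a * q\<^sup>2) * (F_term q a n * (1 - q ^ (2*n)) - F_term q a (Suc n) * (1 - q ^ (2 * Suc n)))"
proof -
  define x where "x = q ^ (2*n)"
  define T where "T = F_term q a n"
  define d where "d = 1 - q\<^sup>2 * x"
  define D where "D = 1 + a * (q\<^sup>2 * x)"
  have pow: "q ^ (2*n+1) = q * x" "q ^ (2*n+2) = q\<^sup>2 * x" "q ^ (2 * Suc n) = q\<^sup>2 * x"
    by (simp_all add: x_def power_add power2_eq_square)
  have nz: "d \<noteq> 0" "D \<noteq> 0"
    using one_minus_power_nonzero[OF q, of "2*n+2"] one_pm_mult_power_nonzero(1)[OF a q, of "2*n+2"]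
    unfolding d_def D_def pow by auto
  have shift: "F_term q (q\<^sup>2 * a) n = x * (1 + a * q\<^sup>2) * T / D"
    using F_term_shift[OF q a, of n] nz(2) unfolding pow(2) x_def[symmetric] T_def D_def
    by (simp add: field_simps)
  have factor: "F_factor q a n = - (q * a * x * (1 + q * x)) / (d * D)"
    by (simp add: F_factor_def pow d_def D_def power2_eq_square mult.assoc flip: x_def)
  have "(1 + a * q\<^sup>2) * (T * (1 - x) - T * F_factor q a n * d)
      = (1 + a * q\<^sup>2) * T * ((1 - x) * D + q * a * x * (1 + q * x)) / D"
    unfolding factor using nz by (simp add: field_simps)
  also have "\<dots> = (1 + a * q\<^sup>2) * T * (D - (1 - q * a) * x) / D"
    by (simp add: D_def algebra_simps power2_eq_square)
  also have "\<dots> = (1 + a * q\<^sup>2) * T - (1 - q * a) * (x * (1 + a * q\<^sup>2) * T / D)"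
    using nz by (simp add: field_simps)
  finally show ?thesis
    unfolding shift F_term_Suc pow(3) x_def[symmetric] T_def[symmetric] d_def[symmetric] by simp
qed

lemma norm_F_term_le:
  assumes q: "norm q < 1" and a: "norm a \<le> 1"
  shows "norm (F_term q a n) \<le> norm a ^ n * (\<Prod>j<n. F_factor_bound q * (norm q ^ 2) ^ j)"
proof -
  have "norm (F_term q a n) = (\<Prod>j<n. norm (F_factor q a j))"
    by (simp add: F_term_def prod_norm)
  also have "\<dots> \<le> (\<Prod>j<n. norm a * (F_factor_bound q * (norm q ^ 2) ^ j))"
    by (intro prod_mono conjI norm_F_factor_le q a norm_ge_zero)
  also have "\<dots> = norm a ^ n * (\<Prod>j<n. F_factor_bound q * (norm q ^ 2) ^ j)"
    by (simp add: prod.distrib)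
  finally show ?thesis .
qed

lemma summable_F_majorant:
  assumes "norm q < 1"
  shows "summable (\<lambda>n. \<Prod>j<n. F_factor_bound q * (norm q ^ 2) ^ j)"
  using assms by (intro summable_prod_geometric_factors)
    (auto simp: F_factor_bound_def power_less_one_iff)

lemma summable_F_term:
  assumes q: "norm q < 1" and a: "norm a \<le> 1"
  shows "summable (F_term q a)"
proof (rule summable_comparison_test[OF _ summable_F_majorant[OF q]])
  have "norm a ^ n * (\<Prod>j<n. F_factor_bound q * (norm q ^ 2) ^ j)
      \<le> (\<Prod>j<n. F_factor_bound q * (norm q ^ 2) ^ j)" for n
    using a q by (intro mult_left_le_one_le prod_nonneg power_le_one)
      (auto simp: F_factor_bound_def)
  then show "\<exists>N. \<forall>n\<ge>N. norm (F_term q a n) \<le> (\<Prod>j<n. F_factor_bound q * (norm q ^ 2) ^ j)"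
    using norm_F_term_le[OF q a] order_trans by blast
qed

lemma F_functional_equation:
  assumes q: "norm q < 1" and a: "norm a \<le> 1"
  shows "(1 + a * q\<^sup>2) * F q a = (1 - q * a) * F q (q\<^sup>2 * a)"
proof -
  have norm_q2a: "norm (q\<^sup>2 * a) \<le> 1"
    using q a by (simp add: norm_mult norm_power mult_le_one power_le_one)
  define e where "e n = F_term q a n * (1 - q ^ (2*n))" for n
  have "(\<lambda>n. q ^ (2*n)) \<longlonglongrightarrow> 0"
    using q by (simp add: power_mult LIMSEQ_power_zero norm_power power_less_one_iff)
  then have "e \<longlonglongrightarrow> 0 * (1 - 0)"
    unfolding e_def
    by (intro tendsto_mult tendsto_diff tendsto_const summable_LIMSEQ_zero[OF summable_F_term[OF q a]])
  then have "(\<lambda>n. e n - e (Suc n)) sums e 0"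
    using telescope_sums'[of e 0] by simp
  then have zero: "(\<lambda>n. (1 + a * q\<^sup>2) * F_term q a n - (1 - q * a) * F_term q (q\<^sup>2 * a) n) sums 0"
    using sums_mult[of _ 0 "1 + a * q\<^sup>2"] by (simp add: F_term_telescoping[OF q a] e_def)
  have "(\<lambda>n. (1 + a * q\<^sup>2) * F_term q a n - (1 - q * a) * F_term q (q\<^sup>2 * a) n)
      sums ((1 + a * q\<^sup>2) * F q a - (1 - q * a) * F q (q\<^sup>2 * a))"
    unfolding F_def using q a norm_q2a
    by (intro sums_diff sums_mult summable_sums summable_F_term)
  from sums_unique2[OF this zero] show ?thesis
    by simp
qed

lemma norm_F_minus_one_le:
  assumes q: "norm q < 1"
  obtains C where "\<And>a. norm a \<le> 1 \<Longrightarrow> norm (F q a - 1) \<le> C * norm a"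
proof
  define m where "m n = (\<Prod>j<n. F_factor_bound q * (norm q ^ 2) ^ j)" for n
  have "summable m"
    unfolding m_def by (rule summable_F_majorant[OF q])
  then have m: "summable (\<lambda>n. m (Suc n))" "0 \<le> m n" for n
    using q by (simp_all only: summable_Suc_iff) (auto simp: m_def F_factor_bound_def intro!: prod_nonneg)
  fix a :: complex assume a: "norm a \<le> 1"
  have bound: "norm (F_term q a (Suc n)) \<le> norm a * m (Suc n)" for n
  proof -
    have "norm a ^ Suc n \<le> norm a"
      using a by (simp add: mult_left_le power_le_one)
    then show ?thesis
      using norm_F_term_le[OF q a, of "Suc n"] m(2)[of "Suc n"] unfolding m_def
      by (meson mult_right_mono order_trans)
  qed
  have "F q a - 1 = (\<Sum>n. F_term q a (Suc n))"
    using suminf_split_head[OF summable_F_term[OF q a]] by (simp add: F_def)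
  also have "norm \<dots> \<le> (\<Sum>n. norm a * m (Suc n))"
    using bound m(1) by (intro norm_suminf_le summable_mult)
  also have "\<dots> = (\<Sum>n. m (Suc n)) * norm a"
    using m(1) by (simp add: suminf_mult mult.commute)
  finally show "norm (F q a - 1) \<le> (\<Sum>n. m (Suc n)) * norm a" .
qed

lemma F_tendsto_one:
  assumes q: "norm q < 1"
  shows "(\<lambda>M. F q (q ^ (2*M))) \<longlonglongrightarrow> 1"
proof -
  obtain C where C: "\<And>a. norm a \<le> 1 \<Longrightarrow> norm (F q a - 1) \<le> C * norm a"
    using norm_F_minus_one_le[OF q] by blast
  have bound: "norm (F q (q ^ (2*M)) - 1) \<le> C * norm (q ^ (2*M))" for M
    using q by (intro C) (simp add: norm_power power_le_one)
  have "(\<lambda>M. C * norm (q ^ (2*M))) \<longlonglongrightarrow> C * 0"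
    using q by (intro tendsto_mult tendsto_const)
      (simp add: power_mult LIMSEQ_power_zero norm_power power_less_one_iff)
  then have "(\<lambda>M. F q (q ^ (2*M)) - 1) \<longlonglongrightarrow> 0"
    by (intro Lim_null_comparison[OF always_eventually[OF allI[OF bound]]]) simp
  then show ?thesis
    by (simp add: LIM_zero_iff)
qed

lemma F_one_mult_prod:
  assumes q: "norm q < 1"
  shows "F q 1 * (\<Prod>m<M. 1 + q ^ (2*m+2)) = (\<Prod>m<M. 1 - q ^ (2*m+1)) * F q (q ^ (2*M))"
proof (induction M)
  case (Suc M)
  have a: "norm (q ^ (2*M)) \<le> 1"
    using q by (simp add: norm_power power_le_one)
  have step: "(1 + q ^ (2*M+2)) * F q (q ^ (2*M)) = (1 - q ^ (2*M+1)) * F q (q ^ (2 * Suc M))"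
    using F_functional_equation[OF q a] by (simp add: power_add power2_eq_square ac_simps)
  have "F q 1 * (\<Prod>m<Suc M. 1 + q ^ (2*m+2))
      = (F q 1 * (\<Prod>m<M. 1 + q ^ (2*m+2))) * (1 + q ^ (2*M+2))"
    by (simp only: prod.lessThan_Suc mult.assoc)
  also have "\<dots> = (\<Prod>m<M. 1 - q ^ (2*m+1)) * ((1 + q ^ (2*M+2)) * F q (q ^ (2*M)))"
    unfolding Suc.IH by (simp only: mult_ac)
  also have "\<dots> = (\<Prod>m<Suc M. 1 - q ^ (2*m+1)) * F q (q ^ (2 * Suc M))"
    by (simp only: step prod.lessThan_Suc mult.assoc)
  finally show ?case .
qed simp

lemma F_one_eq:
  assumes q: "norm q < 1"
  shows "F q 1 = qpochinf q q / qpochinf (q ^ 4) (q ^ 4)"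
proof -
  have q4: "norm (q ^ 4) < 1"
    using q by (simp add: norm_power power_less_one_iff)
  have "F q 1 * qpoch (q ^ 4) (q ^ 4) M = qpoch q q (2*M) * F q (q ^ (2*M))" for M
  proof -
    have "F q 1 * qpoch (q ^ 4) (q ^ 4) M
        = (F q 1 * (\<Prod>m<M. 1 + q ^ (2*m+2))) * (\<Prod>m<M. 1 - q ^ (2*m+2))"
      by (simp only: qpoch_fourth_power prod.distrib mult.assoc)
    also have "\<dots> = qpoch q q (2*M) * F q (q ^ (2*M))"
      unfolding F_one_mult_prod[OF q] qpoch_even_length prod.distrib by (simp only: mult_ac)
    finally show ?thesis .
  qed
  moreover have "(\<lambda>M. F q 1 * qpoch (q ^ 4) (q ^ 4) M) \<longlonglongrightarrow> F q 1 * qpochinf (q ^ 4) (q ^ 4)"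
    by (intro tendsto_mult tendsto_const qpoch_tendsto_qpochinf q4)
  moreover have "(\<lambda>M. qpoch q q (2*M) * F q (q ^ (2*M))) \<longlonglongrightarrow> qpochinf q q * 1"
    using LIMSEQ_subseq_LIMSEQ[OF qpoch_tendsto_qpochinf(2)[OF q], of "\<lambda>M. 2*M"]
    by (intro tendsto_mult F_tendsto_one q) (simp_all add: strict_mono_def comp_def)
  ultimately have "F q 1 * qpochinf (q ^ 4) (q ^ 4) = qpochinf q q"
    using LIMSEQ_unique by auto
  moreover have "qpochinf (q ^ 4) (q ^ 4) \<noteq> 0"
    using q4 one_minus_power_nonzero[OF q4, of "Suc k" for k]
    by (intro qpochinf_nonzero) (auto simp flip: power_Suc)
  ultimately show ?thesis
    by (simp add: field_simps)
qed

lemma F_term_one_closed_form: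
  assumes q: "norm q < 1"
  shows "F_term q 1 k = (-1) ^ k * q ^ (k\<^sup>2) * qpoch (-q) (q\<^sup>2) k / qpoch (q ^ 4) (q ^ 4) k"
proof (induction k)
  case (Suc k)
  define x where "x = q ^ (2*k)"
  define P where "P = qpoch (-q) (q\<^sup>2) k"
  define Q where "Q = qpoch (q ^ 4) (q ^ 4) k"
  have square: "(Suc k)\<^sup>2 = k\<^sup>2 + 1 + 2*k"
    by (simp add: power2_eq_square)
  have pow: "q ^ (2*k+1) = q * x" "q ^ (2*k+2) = q\<^sup>2 * x" "(q\<^sup>2) ^ k = x"
    "q ^ ((Suc k)\<^sup>2) = q ^ (k\<^sup>2) * q * x"
    unfolding x_def square power_add power_mult by simp_all
  have "q ^ 4 * (q ^ 4) ^ k = q\<^sup>2 * q\<^sup>2 * ((q\<^sup>2) ^ k * (q\<^sup>2) ^ k)"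
    by (simp flip: power_mult power_add)
  then have pow4: "q ^ 4 * (q ^ 4) ^ k = (q\<^sup>2 * x)\<^sup>2"
    unfolding pow(3) by (simp add: power2_eq_square ac_simps)
  have nz: "Q \<noteq> 0" "1 - q\<^sup>2 * x \<noteq> 0" "1 + q\<^sup>2 * x \<noteq> 0"
    using qpoch_fourth_power_nonzero[OF q, of k] one_minus_power_nonzero[OF q, of "2*k+2"]
      one_pm_mult_power_nonzero(1)[of 1, OF _ q, of "2*k+2"]
    unfolding Q_def pow by auto
  have "F_term q 1 (Suc k) = (-1) ^ k * q ^ (k\<^sup>2) * P / Q
      * (- (q * x * (1 + q * x)) / ((1 - q\<^sup>2 * x) * (1 + q\<^sup>2 * x)))"
    by (simp add: Suc.IH F_factor_def pow P_def Q_def power2_eq_square mult.assoc flip: x_def)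
  also have "\<dots> = (-1) ^ Suc k * (q ^ (k\<^sup>2) * q * x) * (P * (1 + q * x))
      / (Q * (1 - (q\<^sup>2 * x)\<^sup>2))"
    using nz by (simp add: field_simps power2_eq_square)
  also have "\<dots> = (-1) ^ Suc k * q ^ ((Suc k)\<^sup>2) * qpoch (-q) (q\<^sup>2) (Suc k)
      / qpoch (q ^ 4) (q ^ 4) (Suc k)"
    by (simp add: qpoch_def pow P_def Q_def flip: pow4)
  finally show ?case .
qed (simp add: qpoch_def)

lemma F_term_one_odd_pair:
  assumes q: "norm q < 1" and k: "odd k"
  shows "F_term q 1 k + F_term q 1 (Suc k)
       = q ^ (k\<^sup>2) * qpoch (-q) (q\<^sup>2) k * (-1 + q ^ (2*k+1) + q ^ (4*k+4) + q ^ (4*k+2))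
         / qpoch (q ^ 4) (q ^ 4) (Suc k)"
proof -
  define y where "y = q ^ (2*k+1)"
  define P where "P = qpoch (-q) (q\<^sup>2) k"
  define Q where "Q = qpoch (q ^ 4) (q ^ 4) k"
  have pow: "q ^ ((Suc k)\<^sup>2) = q ^ (k\<^sup>2) * y" "q * (q\<^sup>2) ^ k = y"
    "q ^ (4*k+2) = y\<^sup>2" "q ^ (4*k+4) = q\<^sup>2 * y\<^sup>2" "q ^ 4 * (q ^ 4) ^ k = q\<^sup>2 * y\<^sup>2"
    unfolding y_def power_mult[symmetric] power_Suc[symmetric] power_add[symmetric]
    by (rule arg_cong[where f = "power q"], simp add: power2_eq_square)+
  have nz: "Q \<noteq> 0" "1 - q\<^sup>2 * y\<^sup>2 \<noteq> 0"
    using qpoch_fourth_power_nonzero[OF q, of k] one_minus_power_nonzero[OF q, of "4*k+4"]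
    unfolding Q_def pow by auto
  have "F_term q 1 k + F_term q 1 (Suc k)
      = - (q ^ (k\<^sup>2) * P / Q) + q ^ (k\<^sup>2) * y * (P * (1 + y)) / (Q * (1 - q\<^sup>2 * y\<^sup>2))"
    unfolding F_term_one_closed_form[OF q]
    using k by (simp add: qpoch_def pow P_def Q_def flip: pow(5))
  also have "\<dots> = q ^ (k\<^sup>2) * P * (-1 + y + q\<^sup>2 * y\<^sup>2 + y\<^sup>2) / (Q * (1 - q\<^sup>2 * y\<^sup>2))"
    using nz by (simp add: field_simps power2_eq_square)
  finally show ?thesis
    unfolding qpoch_Suc pow(3-5) P_def[symmetric] Q_def[symmetric] y_def[symmetric] .
qed

theorem mainTheorem8:
  fixes q :: complex
  assumes "norm q < 1"
  shows "summable (\<lambda>m. let n = Suc m in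
            q ^ ((2*n - 1)^2) * qpoch (-q) (q^2) (2*n - 1)
              * (-1 + q ^ (4*n - 1) + q ^ (8*n) + q ^ (8*n - 2))
              / qpoch (q^4) (q^4) (2*n))
       \<and> 1 + (\<Sum>m. let n = Suc m in
            q ^ ((2*n - 1)^2) * qpoch (-q) (q^2) (2*n - 1)
              * (-1 + q ^ (4*n - 1) + q ^ (8*n) + q ^ (8*n - 2))
              / qpoch (q^4) (q^4) (2*n))
         = qpochinf q q / qpochinf (q^4) (q^4)"
    (is "summable ?t \<and> 1 + suminf ?t = _")
proof -
  have "?t m = F_term q 1 (2*m+1) + F_term q 1 (Suc (2*m+1))" for m
  proof -
    have "2 * Suc m = Suc (2*m+1)" "Suc (2*m+1) - 1 = 2*m+1" "4 * Suc m - 1 = 2*(2*m+1)+1"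
      "8 * Suc m = 4*(2*m+1)+4" "4*(2*m+1)+4 - 2 = 4*(2*m+1)+2"
      by simp_all
    then have "?t m = q ^ ((2*m+1)\<^sup>2) * qpoch (-q) (q\<^sup>2) (2*m+1)
        * (-1 + q ^ (2*(2*m+1)+1) + q ^ (4*(2*m+1)+4) + q ^ (4*(2*m+1)+2))
        / qpoch (q ^ 4) (q ^ 4) (Suc (2*m+1))"
      by (simp only: Let_def)
    also have "\<dots> = F_term q 1 (2*m+1) + F_term q 1 (Suc (2*m+1))"
      by (rule F_term_one_odd_pair[OF assms, symmetric]) simp
    finally show ?thesis .
  qed
  moreover have "(\<lambda>k. F_term q 1 (Suc k)) sums (F q 1 - 1)"
    unfolding sums_Suc_iff F_def using summable_sums[OF summable_F_term[OF assms, of 1]] by simp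
  then have "(\<lambda>m. \<Sum>k = m*2..<m*2+2. F_term q 1 (Suc k)) sums (F q 1 - 1)"
    by (rule sums_group) simp
  ultimately have "?t sums (F q 1 - 1)"
    by (simp add: mult.commute)
  then show ?thesis
    using F_one_eq[OF assms] by (simp add: sums_iff)
qed

end
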